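(* Let $A=(a_{ij})$ be a real $m\times n$ matrix and let $X=(X_{ij})_{i\le m,j\le n}$ be a random matrix with independent mean-zero entries satisfying $\mathbb{E}|X_{ij}|\ge c$ for all $i,j$, for some $c\in(0,\infty)$. Then for all $1\le p,q\le\infty$, $$\mathbb{E}\|X_A\colon\ell_p^n\to\ell_q^m\|\ge\frac{c}{2\sqrt2}\|A\circ A\colon\ell^n_{p/2}\to\ell^m_{q/2}\|^{1/2}.$$
   Context: $X_A=(a_{ij}X_{ij})$, $A\circ A=(a_{ij}^2)$. $\ell_s^n$ is $\mathbb{R}^n$ with $\|x\|_s=(\sum|x_j|^s)^{1/s}$ ($\max$ for $s=\infty$; quasi-norm for $s<1$), $\|B\colon\ell_s^n\to\ell_t^m\|=\sup_{\|x\|_s\le1}\|Bx\|_t$. *)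

theory Defs
  imports "HOL-Probability.Probability"
begin

definition lnorm :: "ereal \<Rightarrow> nat \<Rightarrow> (nat \<Rightarrow> real) \<Rightarrow> real" where
  "lnorm s n x =
     (if s = \<infinity> then Max (insert 0 ((\<lambda>j. \<bar>x j\<bar>) ` {..<n}))
      else (\<Sum>j<n. \<bar>x j\<bar> powr real_of_ereal s) powr (1 / real_of_ereal s))"

definition opnorm :: "ereal \<Rightarrow> ereal \<Rightarrow> nat \<Rightarrow> nat \<Rightarrow> (nat \<Rightarrow> nat \<Rightarrow> real) \<Rightarrow> real" where
  "opnorm s t m n B =
     Sup {lnorm t m (\<lambda>i. \<Sum>j<n. B i j * x j) | x.
            lnorm s n x \<le> 1 \<and> (\<forall>j\<ge>n. x j = 0)}"

end

theory Submission
  imports Defs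
begin

text \<open>
  Fix x in the unit ball of ell_p. Dualising the ell_q norm with nonnegative norming weights,
  E ||X_A x||_q dominates a nonnegative combination of the row expectations
  E |\<Sum>j. a_ij x_j X_ij|, and each of these is at least c / (2 sqrt 2) times the Euclidean
  norm of the row (a_ij x_j)_j. For this, symmetrisation (E|U| \<le> E|U + V| for independent
  mean-zero V) compares the row sum with all of its sign changes, Szarek's inequality bounds the
  average over signs from below by 1 / sqrt 2 times the square function, and Cauchy-Schwarz
  together with E |X_ij| \<ge> c bounds the expected square function by c times the row norm.
  Substituting x_j = sqrt |z_j| turns the supremum over x of the resulting lower bound into
  ||A o A : ell_(p/2) \<rightarrow> ell_(q/2)|| ^ (1/2).

  Szarek's inequality is proved by Fourier analysis on the cube: f = |\<Sum>j. \<plusminus>b_j| is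
  invariant under flipping all signs, so it has no Walsh coefficients of odd level and its
  variance is at most half of its total influence, which is at most ||b||_2 ^ 2.
\<close>

section \<open>Walsh analysis on the discrete cube\<close>

text \<open>A point of the cube {-1, 1}^N is encoded by the set T \<subseteq> N of its coordinates equal to -1;
  the group operation is then sym_diff, and walsh S is the character indexed by S \<subseteq> N.\<close>
definition walsh :: "'a set \<Rightarrow> 'a set \<Rightarrow> real" where
  "walsh S T = (-1) ^ card (S \<inter> T)"

lemma card_sym_diff:
  assumes "finite A" "finite B"
  shows "card A + card B = card (sym_diff A B) + 2 * card (A \<inter> B)"
proof -
  have "card A = card (A - B) + card (A \<inter> B)" "card B = card (B - A) + card (A \<inter> B)"
    using assms card_Int_Diff[of A B] card_Int_Diff[of B A] by (simp_all add: Int_commute)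
  moreover have "card (sym_diff A B) = card (A - B) + card (B - A)"
    using assms by (subst card_Un_disjoint) auto
  ultimately show ?thesis by simp
qed

lemma walsh_commute: "walsh S T = walsh T S"
  unfolding walsh_def by (simp add: Int_commute)

lemma walsh_singleton: "walsh {i} T = (if i \<in> T then -1 else 1)"
  unfolding walsh_def by auto

lemma walsh_mult:
  assumes "finite S" "finite R"
  shows "walsh S T * walsh R T = walsh (sym_diff S R) T"
proof -
  have "sym_diff S R \<inter> T = sym_diff (S \<inter> T) (R \<inter> T)" by auto
  then have "card (S \<inter> T) + card (R \<inter> T) = card (sym_diff S R \<inter> T) + 2 * card (S \<inter> R \<inter> T)"
    using card_sym_diff[of "S \<inter> T" "R \<inter> T"] assms by (simp add: Int_ac)
  then have "(-1::real) ^ (card (S \<inter> T) + card (R \<inter> T)) = (-1) ^ card (sym_diff S R \<inter> T)"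
    by (simp add: power_add power_mult)
  then show ?thesis unfolding walsh_def by (simp add: power_add)
qed

lemma walsh_mult_right:
  assumes "finite T" "finite U"
  shows "walsh S T * walsh S U = walsh S (sym_diff T U)"
  using walsh_mult[OF assms, of S] by (simp add: walsh_commute)

text \<open>Pairing T with insert s T for some s \<in> S cancels the sum.\<close>
lemma sum_walsh_eq_0:
  assumes "finite N" "S \<subseteq> N" "S \<noteq> {}"
  shows "(\<Sum>T\<in>Pow N. walsh S T) = 0"
proof -
  obtain s where s: "s \<in> S" using assms by auto
  define N' where "N' = N - {s}"
  have fin: "finite N'" and sN': "s \<notin> N'" using assms unfolding N'_def by auto
  have Pow_N: "Pow N = Pow N' \<union> insert s ` Pow N'"
    using s assms by (simp add: N'_def Pow_insert[symmetric] insert_absorb subset_iff)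
  have flip: "walsh S (insert s T) = - walsh S T" if "T \<in> Pow N'" for T
  proof -
    have "S \<inter> insert s T = insert s (S \<inter> T)" "s \<notin> S \<inter> T" "finite (S \<inter> T)"
      using s that sN' fin finite_subset by auto
    then show ?thesis unfolding walsh_def by simp
  qed
  have "(\<Sum>T\<in>Pow N. walsh S T) = (\<Sum>T\<in>Pow N'. walsh S T) + (\<Sum>T\<in>insert s ` Pow N'. walsh S T)"
    unfolding Pow_N using fin sN' by (intro sum.union_disjoint) auto
  also have "(\<Sum>T\<in>insert s ` Pow N'. walsh S T) = (\<Sum>T\<in>Pow N'. walsh S (insert s T))"
    using sN' by (subst sum.reindex) (auto simp: inj_on_def)
  also have "\<dots> = - (\<Sum>T\<in>Pow N'. walsh S T)" using flip by (simp add: sum_negf)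
  finally show ?thesis by simp
qed

lemma walsh_orthogonal:
  assumes "finite N" "S \<subseteq> N" "R \<subseteq> N"
  shows "(\<Sum>T\<in>Pow N. walsh S T * walsh R T) = (if S = R then 2 ^ card N else 0)"
proof -
  have "finite S" "finite R" using assms finite_subset by auto
  then have "(\<Sum>T\<in>Pow N. walsh S T * walsh R T) = (\<Sum>T\<in>Pow N. walsh (sym_diff S R) T)"
    by (simp add: walsh_mult)
  also have "\<dots> = (if S = R then 2 ^ card N else 0)"
    using assms sum_walsh_eq_0[of N "sym_diff S R"] by (auto simp: walsh_def card_Pow)
  finally show ?thesis .
qed

lemma sum_Pow_reindex_sym_diff:
  assumes "U \<subseteq> N"
  shows "(\<Sum>T\<in>Pow N. g (sym_diff T U)) = (\<Sum>T\<in>Pow N. g T)"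
  by (rule sum.reindex_bij_witness[where i="\<lambda>T. sym_diff T U" and j="\<lambda>T. sym_diff T U"])
     (use assms in auto)

definition walsh_coeff :: "'a set \<Rightarrow> ('a set \<Rightarrow> real) \<Rightarrow> 'a set \<Rightarrow> real" where
  "walsh_coeff N f S = (\<Sum>T\<in>Pow N. f T * walsh S T) / 2 ^ card N"

lemma walsh_inversion:
  assumes "finite N" "T \<subseteq> N"
  shows "(\<Sum>S\<in>Pow N. walsh_coeff N f S * walsh S T) = f T"
proof -
  have "(\<Sum>S\<in>Pow N. walsh_coeff N f S * walsh S T)
      = (\<Sum>S\<in>Pow N. \<Sum>T'\<in>Pow N. f T' * (walsh T' S * walsh T S)) / 2 ^ card N"
    unfolding walsh_coeff_def
    by (simp add: sum_divide_distrib sum_distrib_right walsh_commute mult.assoc)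
  also have "\<dots> = (\<Sum>T'\<in>Pow N. f T' * (\<Sum>S\<in>Pow N. walsh T' S * walsh T S)) / 2 ^ card N"
    by (subst sum.swap) (simp add: sum_distrib_left)
  also have "\<dots> = (\<Sum>T'\<in>Pow N. if T' = T then f T * 2 ^ card N else 0) / 2 ^ card N"
    using assms by (intro arg_cong[where f="\<lambda>x. x / _"] sum.cong) (auto simp: walsh_orthogonal)
  also have "\<dots> = f T" using assms by (simp add: if_distrib)
  finally show ?thesis .
qed

lemma walsh_parseval:
  assumes "finite N"
  shows "(\<Sum>T\<in>Pow N. (f T)\<^sup>2) = 2 ^ card N * (\<Sum>S\<in>Pow N. (walsh_coeff N f S)\<^sup>2)"
proof -
  have "(\<Sum>T\<in>Pow N. (f T)\<^sup>2) = (\<Sum>T\<in>Pow N. f T * (\<Sum>S\<in>Pow N. walsh_coeff N f S * walsh S T))"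
    using walsh_inversion[OF assms] by (simp add: power2_eq_square)
  also have "\<dots> = (\<Sum>S\<in>Pow N. walsh_coeff N f S * (\<Sum>T\<in>Pow N. f T * walsh S T))"
    by (simp add: sum_distrib_left sum_distrib_right mult_ac) (rule sum.swap)
  also have "\<dots> = (\<Sum>S\<in>Pow N. walsh_coeff N f S * (2 ^ card N * walsh_coeff N f S))"
    unfolding walsh_coeff_def by simp
  finally show ?thesis by (simp add: sum_distrib_left power2_eq_square mult_ac)
qed

lemma walsh_coeff_diff: "walsh_coeff N (\<lambda>T. f T - g T) S = walsh_coeff N f S - walsh_coeff N g S"
  unfolding walsh_coeff_def by (simp add: left_diff_distrib sum_subtractf diff_divide_distrib)

lemma walsh_coeff_translate:
  assumes "finite N" "U \<subseteq> N"
  shows "walsh_coeff N (\<lambda>T. f (sym_diff T U)) S = walsh S U * walsh_coeff N f S"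
proof -
  have "(\<Sum>T\<in>Pow N. f (sym_diff T U) * walsh S T) = (\<Sum>T\<in>Pow N. f T * walsh S (sym_diff T U))"
  proof -
    have "sym_diff (sym_diff T U) U = T" for T :: "'a set" by auto
    then show ?thesis
      using sum_Pow_reindex_sym_diff[OF assms(2), of "\<lambda>T. f T * walsh S (sym_diff T U)"]
      by (simp only:)
  qed
  also have "\<dots> = (\<Sum>T\<in>Pow N. walsh S U * (f T * walsh S T))"
    using assms finite_subset[of _ N]
    by (intro sum.cong refl) (simp add: walsh_mult_right[of _ U, symmetric] mult_ac)
  finally show ?thesis unfolding walsh_coeff_def by (simp add: sum_distrib_left)
qed

lemma sum_flip_diff_sq:
  assumes "finite N" "i \<in> N"
  shows "(\<Sum>T\<in>Pow N. (f T - f (sym_diff T {i}))\<^sup>2)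
       = 2 ^ card N * (\<Sum>S\<in>Pow N. if i \<in> S then 4 * (walsh_coeff N f S)\<^sup>2 else 0)"
proof -
  have "(walsh_coeff N (\<lambda>T. f T - f (sym_diff T {i})) S)\<^sup>2
      = (if i \<in> S then 4 * (walsh_coeff N f S)\<^sup>2 else 0)" for S
    using assms
    by (simp add: walsh_coeff_diff walsh_coeff_translate walsh_commute[of _ "{i}"] walsh_singleton
        power2_eq_square)
  then show ?thesis using walsh_parseval[OF assms(1), of "\<lambda>T. f T - f (sym_diff T {i})"] by simp
qed

lemma total_influence_eq:
  assumes "finite N"
  shows "(\<Sum>i\<in>N. \<Sum>T\<in>Pow N. (f T - f (sym_diff T {i}))\<^sup>2)
       = 4 * 2 ^ card N * (\<Sum>S\<in>Pow N. real (card S) * (walsh_coeff N f S)\<^sup>2)"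
proof -
  have "(\<Sum>i\<in>N. \<Sum>T\<in>Pow N. (f T - f (sym_diff T {i}))\<^sup>2)
      = 2 ^ card N * (\<Sum>S\<in>Pow N. \<Sum>i\<in>N. if i \<in> S then 4 * (walsh_coeff N f S)\<^sup>2 else 0)"
    using assms by (simp add: sum_flip_diff_sq sum_distrib_left) (rule sum.swap)
  also have "\<dots> = 2 ^ card N * (\<Sum>S\<in>Pow N. 4 * (real (card S) * (walsh_coeff N f S)\<^sup>2))"
    using assms by (intro arg_cong[where f="\<lambda>x. _ * x"] sum.cong refl)
      (auto simp: sum.If_cases Int_absorb1)
  finally show ?thesis by (simp add: sum_distrib_left mult_ac)
qed

lemma walsh_coeff_odd_eq_0:
  assumes "finite N" "S \<subseteq> N" "odd (card S)" "\<And>T. T \<subseteq> N \<Longrightarrow> f (sym_diff T N) = f T"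
  shows "walsh_coeff N f S = 0"
proof -
  have "walsh_coeff N f S = walsh_coeff N (\<lambda>T. f (sym_diff T N)) S"
    unfolding walsh_coeff_def using assms(4) by (intro arg_cong[where f="\<lambda>x. x / _"] sum.cong) auto
  also have "\<dots> = walsh S N * walsh_coeff N f S" using assms by (simp add: walsh_coeff_translate)
  also have "\<dots> = - walsh_coeff N f S" using assms by (simp add: walsh_def Int_absorb2)
  finally show ?thesis by simp
qed

text \<open>Only even levels occur (walsh_coeff_odd_eq_0), so every nonconstant level is at least 2.\<close>
lemma even_function_poincare:
  assumes "finite N" "\<And>T. T \<subseteq> N \<Longrightarrow> f (sym_diff T N) = f T"
  shows "2 * ((\<Sum>S\<in>Pow N. (walsh_coeff N f S)\<^sup>2) - (walsh_coeff N f {})\<^sup>2)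
       \<le> (\<Sum>S\<in>Pow N. real (card S) * (walsh_coeff N f S)\<^sup>2)"
proof -
  have "(\<Sum>S\<in>Pow N. (walsh_coeff N f S)\<^sup>2) - (walsh_coeff N f {})\<^sup>2
      = (\<Sum>S\<in>Pow N - {{}}. (walsh_coeff N f S)\<^sup>2)"
    using assms by (subst sum.remove[of "Pow N" "{}"]) auto
  also have "2 * \<dots> \<le> (\<Sum>S\<in>Pow N - {{}}. real (card S) * (walsh_coeff N f S)\<^sup>2)"
    unfolding sum_distrib_left
  proof (rule sum_mono)
    fix S assume S: "S \<in> Pow N - {{}}"
    then have "finite S" "S \<noteq> {}" using assms finite_subset by auto
    then have "card S \<noteq> 0" by simp
    then have "odd (card S) \<or> 2 \<le> card S" by presburger
    then show "2 * (walsh_coeff N f S)\<^sup>2 \<le> real (card S) * (walsh_coeff N f S)\<^sup>2"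
      using S assms walsh_coeff_odd_eq_0[of N S f] by (auto intro: mult_right_mono)
  qed
  also have "\<dots> = (\<Sum>S\<in>Pow N. real (card S) * (walsh_coeff N f S)\<^sup>2)"
    using assms by (intro sum.mono_neutral_left) auto
  finally show ?thesis .
qed

definition signed_sum :: "'a set \<Rightarrow> ('a \<Rightarrow> real) \<Rightarrow> 'a set \<Rightarrow> real" where
  "signed_sum N b T = (\<Sum>j\<in>N. walsh {j} T * b j)"

lemma sum_signed_sum_sq:
  assumes "finite N"
  shows "(\<Sum>T\<in>Pow N. (signed_sum N b T)\<^sup>2) = 2 ^ card N * (\<Sum>j\<in>N. (b j)\<^sup>2)"
proof -
  have "(\<Sum>T\<in>Pow N. (signed_sum N b T)\<^sup>2)
      = (\<Sum>T\<in>Pow N. \<Sum>j\<in>N. \<Sum>l\<in>N. b j * b l * (walsh {j} T * walsh {l} T))"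
    unfolding signed_sum_def power2_eq_square sum_product by (simp add: mult_ac)
  also have "\<dots> = (\<Sum>j\<in>N. \<Sum>l\<in>N. b j * b l * (\<Sum>T\<in>Pow N. walsh {j} T * walsh {l} T))"
    unfolding sum_distrib_left by (subst sum.swap, rule sum.cong[OF refl], rule sum.swap)
  also have "\<dots> = (\<Sum>j\<in>N. \<Sum>l\<in>N. if l = j then b j * b j * 2 ^ card N else 0)"
    using assms by (intro sum.cong refl) (auto simp: walsh_orthogonal)
  also have "\<dots> = 2 ^ card N * (\<Sum>j\<in>N. (b j)\<^sup>2)"
    using assms by (simp add: sum_distrib_left power2_eq_square mult_ac)
  finally show ?thesis .
qed

lemma signed_sum_compl:
  assumes "T \<subseteq> N"
  shows "signed_sum N b (sym_diff T N) = - signed_sum N b T"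
proof -
  have "walsh {j} (sym_diff T N) * b j = - (walsh {j} T * b j)" if "j \<in> N" for j
    using assms that by (auto simp: walsh_singleton)
  then show ?thesis unfolding signed_sum_def sum_negf[symmetric] by (rule sum.cong[OF refl])
qed

lemma signed_sum_flip:
  assumes "finite N" "i \<in> N"
  shows "signed_sum N b (sym_diff T {i}) = signed_sum N b T - 2 * walsh {i} T * b i"
proof -
  have "walsh {j} (sym_diff T {i}) * b j
      = walsh {j} T * b j - (if j = i then 2 * walsh {i} T * b i else 0)" for j
    by (auto simp: walsh_singleton)
  then show ?thesis
    using assms unfolding signed_sum_def by (simp add: sum_subtractf)
qed

lemma total_influence_abs_signed_sum_le:
  assumes "finite N"
  shows "(\<Sum>i\<in>N. \<Sum>T\<in>Pow N. (\<bar>signed_sum N b T\<bar> - \<bar>signed_sum N b (sym_diff T {i})\<bar>)\<^sup>2)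
       \<le> 4 * 2 ^ card N * (\<Sum>j\<in>N. (b j)\<^sup>2)"
proof -
  let ?s = "signed_sum N b"
  have pointwise: "(\<bar>?s T\<bar> - \<bar>?s (sym_diff T {i})\<bar>)\<^sup>2
      \<le> (?s T)\<^sup>2 + (?s (sym_diff T {i}))\<^sup>2 - 2 * (?s T)\<^sup>2 + 4 * (walsh {i} T * b i * ?s T)"
    if "i \<in> N" for T i
  proof -
    have "(\<bar>?s T\<bar> - \<bar>?s (sym_diff T {i})\<bar>)\<^sup>2
        = (?s T)\<^sup>2 + (?s (sym_diff T {i}))\<^sup>2 - 2 * \<bar>?s T * ?s (sym_diff T {i})\<bar>"
      by (simp add: power2_eq_square abs_mult algebra_simps)
    also have "\<dots> \<le> (?s T)\<^sup>2 + (?s (sym_diff T {i}))\<^sup>2 - 2 * (?s T * ?s (sym_diff T {i}))"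
      by simp
    finally show ?thesis
      unfolding signed_sum_flip[OF assms that] by (simp add: power2_eq_square algebra_simps)
  qed
  have flip_sq: "(\<Sum>T\<in>Pow N. (?s (sym_diff T {i}))\<^sup>2) = (\<Sum>T\<in>Pow N. (?s T)\<^sup>2)" if "i \<in> N" for i
    using sum_Pow_reindex_sym_diff[of "{i}" N "\<lambda>T. (?s T)\<^sup>2"] that by simp
  have "(\<Sum>i\<in>N. \<Sum>T\<in>Pow N. (\<bar>?s T\<bar> - \<bar>?s (sym_diff T {i})\<bar>)\<^sup>2)
      \<le> (\<Sum>i\<in>N. \<Sum>T\<in>Pow N. (?s T)\<^sup>2 + (?s (sym_diff T {i}))\<^sup>2 - 2 * (?s T)\<^sup>2
          + 4 * (walsh {i} T * b i * ?s T))"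
    using pointwise by (intro sum_mono) auto
  also have "\<dots> = 4 * (\<Sum>i\<in>N. \<Sum>T\<in>Pow N. walsh {i} T * b i * ?s T)"
    using flip_sq by (simp add: sum.distrib sum_subtractf sum_distrib_left)
  also have "\<dots> = 4 * (\<Sum>T\<in>Pow N. ?s T * ?s T)"
    by (subst sum.swap) (simp add: signed_sum_def sum_distrib_left sum_distrib_right mult_ac)
  also have "\<dots> = 4 * 2 ^ card N * (\<Sum>j\<in>N. (b j)\<^sup>2)"
    using sum_signed_sum_sq[OF assms, of b] by (simp add: power2_eq_square)
  finally show ?thesis .
qed

text \<open>Szarek's inequality: the Khintchine inequality in L1 with the optimal constant.\<close>
theorem szarek_inequality:
  assumes "finite N"
  shows "2 ^ card N * sqrt (\<Sum>j\<in>N. (b j)\<^sup>2) / sqrt 2 \<le> (\<Sum>T\<in>Pow N. \<bar>signed_sum N b T\<bar>)"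
proof -
  define f where "f T = \<bar>signed_sum N b T\<bar>" for T
  define K :: real where "K = 2 ^ card N"
  define B where "B = (\<Sum>j\<in>N. (b j)\<^sup>2)"
  have "K > 0" unfolding K_def by simp
  have coeff_sq: "(\<Sum>S\<in>Pow N. (walsh_coeff N f S)\<^sup>2) = B"
    using walsh_parseval[OF assms, of f] sum_signed_sum_sq[OF assms, of b] \<open>K > 0\<close>
    unfolding f_def K_def B_def by simp
  have "4 * K * (\<Sum>S\<in>Pow N. real (card S) * (walsh_coeff N f S)\<^sup>2) \<le> 4 * K * B"
    using total_influence_abs_signed_sum_le[OF assms, of b] total_influence_eq[OF assms, of f]
    unfolding f_def K_def B_def by simp
  then have "(\<Sum>S\<in>Pow N. real (card S) * (walsh_coeff N f S)\<^sup>2) \<le> B"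
    using \<open>K > 0\<close> by simp
  moreover have "2 * (B - (walsh_coeff N f {})\<^sup>2) \<le> (\<Sum>S\<in>Pow N. real (card S) * (walsh_coeff N f S)\<^sup>2)"
    using even_function_poincare[OF assms, of f] coeff_sq by (simp add: f_def signed_sum_compl)
  ultimately have "B / 2 \<le> (walsh_coeff N f {})\<^sup>2" by (simp add: field_simps)
  moreover have "walsh_coeff N f {} = (\<Sum>T\<in>Pow N. f T) / K"
    unfolding walsh_coeff_def K_def by (simp add: walsh_def)
  ultimately have "sqrt B / sqrt 2 \<le> (\<Sum>T\<in>Pow N. f T) / K"
    using \<open>K > 0\<close> by (simp add: real_le_lsqrt f_def sum_nonneg flip: real_sqrt_divide)
  then show ?thesis
    using \<open>K > 0\<close> unfolding f_def K_def B_def by (simp add: field_simps)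
qed

section \<open>The ell_s norms and operator norms\<close>

lemma lnorm_infinity: "lnorm \<infinity> m x = Max (insert 0 ((\<lambda>j. \<bar>x j\<bar>) ` {..<m}))"
  unfolding lnorm_def by simp

lemma lnorm_ereal: "lnorm (ereal r) m x = (\<Sum>j<m. \<bar>x j\<bar> powr r) powr (1 / r)"
  unfolding lnorm_def by simp

lemma lnorm_cong: "(\<And>i. i < m \<Longrightarrow> x i = y i) \<Longrightarrow> lnorm s m x = lnorm s m y"
  unfolding lnorm_def by (auto intro!: sum.cong arg_cong[where f=Max] image_cong)

lemma lnorm_abs: "lnorm s m (\<lambda>i. \<bar>x i\<bar>) = lnorm s m x"
  unfolding lnorm_def by simp

lemma lnorm_nonneg: "0 \<le> lnorm s m x"
  unfolding lnorm_def by (auto intro: Max_ge)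

lemma lnorm_zero: "lnorm s n (\<lambda>_. 0) = 0"
  unfolding lnorm_def by (cases "n = 0") (simp_all add: image_constant_conv)

lemma abs_le_lnorm:
  assumes "0 < s" "j < m"
  shows "\<bar>x j\<bar> \<le> lnorm s m x"
proof (cases s)
  case (real r)
  with assms have "r > 0" by simp
  then have "\<bar>x j\<bar> = (\<bar>x j\<bar> powr r) powr (1 / r)" by (simp add: powr_powr)
  also have "\<dots> \<le> (\<Sum>j<m. \<bar>x j\<bar> powr r) powr (1 / r)"
    using \<open>r > 0\<close> assms by (intro powr_mono2 member_le_sum) auto
  finally show ?thesis using real by (simp add: lnorm_ereal)
qed (use assms in \<open>auto simp: lnorm_infinity intro: Max_ge\<close>)

lemma lnorm_mono:
  assumes "0 < s" "\<And>i. i < m \<Longrightarrow> \<bar>x i\<bar> \<le> \<bar>y i\<bar>"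
  shows "lnorm s m x \<le> lnorm s m y"
proof (cases s)
  case (real r)
  with assms have "r > 0" by simp
  then show ?thesis
    using real assms by (simp add: lnorm_ereal) (intro powr_mono2 sum_mono sum_nonneg, auto)
next
  case PInf
  have "\<bar>x i\<bar> \<le> Max (insert 0 ((\<lambda>j. \<bar>y j\<bar>) ` {..<m}))" if "i < m" for i
    using assms(2)[OF that] that by (meson Max_ge finite_imageI finite_insert finite_lessThan
        image_eqI insertI2 lessThan_iff order.trans)
  then show ?thesis using PInf by (auto simp: lnorm_infinity intro!: Max.boundedI)
qed (use assms in simp)

lemma lnorm_nonneg_mat_mult_le_abs:
  assumes "0 < s" "\<And>i j. 0 \<le> B i j"
  shows "lnorm s m (\<lambda>i. \<Sum>j<n. B i j * z j) \<le> lnorm s m (\<lambda>i. \<Sum>j<n. B i j * \<bar>z j\<bar>)"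
proof (rule lnorm_mono[OF assms(1)])
  fix i
  have "\<bar>\<Sum>j<n. B i j * z j\<bar> \<le> (\<Sum>j<n. \<bar>B i j * z j\<bar>)" by (rule sum_abs)
  also have "\<dots> = \<bar>\<Sum>j<n. B i j * \<bar>z j\<bar>\<bar>" using assms(2) by (simp add: abs_mult sum_nonneg)
  finally show "\<bar>\<Sum>j<n. B i j * z j\<bar> \<le> \<bar>\<Sum>j<n. B i j * \<bar>z j\<bar>\<bar>" .
qed

lemma lnorm_sqrt:
  assumes "0 < s" "\<And>i. i < m \<Longrightarrow> 0 \<le> g i"
  shows "lnorm s m (\<lambda>i. sqrt (g i)) = sqrt (lnorm (s / 2) m g)"
proof (cases s)
  case (real r)
  with assms have "r > 0" by simp
  have "(\<Sum>j<m. \<bar>sqrt (g j)\<bar> powr r) = (\<Sum>j<m. \<bar>g j\<bar> powr (r / 2))"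
    using assms(2) by (intro sum.cong refl) (simp add: powr_powr flip: powr_half_sqrt)
  moreover have "sqrt (t powr (1 / (r / 2))) = t powr (1 / r)" if "t \<ge> 0" for t :: real
    using that \<open>r > 0\<close> by (simp add: powr_powr flip: powr_half_sqrt)
  ultimately show ?thesis using real by (simp add: lnorm_ereal sum_nonneg)
next
  case PInf
  have "sqrt (Max (insert 0 ((\<lambda>j. \<bar>g j\<bar>) ` {..<m})))
      = Max (sqrt ` insert 0 ((\<lambda>j. \<bar>g j\<bar>) ` {..<m}))"
    by (intro mono_Max_commute) (auto simp: mono_def)
  also have "sqrt ` insert 0 ((\<lambda>j. \<bar>g j\<bar>) ` {..<m}) = insert 0 ((\<lambda>j. \<bar>sqrt (g j)\<bar>) ` {..<m})"
    using assms by (auto simp: image_image)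
  finally show ?thesis using PInf by (simp add: lnorm_infinity)
qed (use assms in simp)

lemma sum_mult_abs_le_lnorm:
  fixes r r' :: real
  assumes "1 < r" "1 < r'" "1 / r' + 1 / r = 1" "\<And>i. 0 \<le> y i" "(\<Sum>i<m. y i powr r') = 1"
  shows "(\<Sum>i<m. y i * \<bar>z i\<bar>) \<le> lnorm (ereal r) m z"
proof (cases "lnorm (ereal r) m z = 0")
  case True
  then have "z i = 0" if "i < m" for i
    using abs_le_lnorm[of "ereal r" i m z] that assms(1) by simp
  then show ?thesis using True by simp
next
  case False
  define Z where "Z = lnorm (ereal r) m z"
  have "Z > 0" using False lnorm_nonneg[of "ereal r" m z] unfolding Z_def by linarith
  have Z_powr: "(\<Sum>i<m. \<bar>z i\<bar> powr r) = Z powr r"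
    unfolding Z_def using assms(1) by (simp add: lnorm_ereal powr_powr sum_nonneg)
  have young: "y i * \<bar>z i\<bar> \<le> Z * (y i powr r' / r' + (\<bar>z i\<bar> / Z) powr r / r)" for i
  proof -
    have "y i * (\<bar>z i\<bar> / Z) \<le> y i powr r' / r' + (\<bar>z i\<bar> / Z) powr r / r"
      using Youngs_inequality[of r' r "y i" "\<bar>z i\<bar> / Z"] assms \<open>Z > 0\<close> by simp
    from mult_left_mono[OF this, of Z] \<open>Z > 0\<close> show ?thesis by (simp add: field_simps)
  qed
  have "(\<Sum>i<m. y i * \<bar>z i\<bar>) \<le> (\<Sum>i<m. Z * (y i powr r' / r' + (\<bar>z i\<bar> / Z) powr r / r))"
    by (intro sum_mono young)
  also have "\<dots> = Z * ((\<Sum>i<m. y i powr r') / r' + (\<Sum>i<m. \<bar>z i\<bar> powr r) / Z powr r / r)"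
    using \<open>Z > 0\<close>
    by (simp add: sum_distrib_left[symmetric] sum.distrib sum_divide_distrib powr_divide)
  also have "\<dots> = Z" using assms \<open>Z > 0\<close> by (simp add: Z_powr)
  finally show ?thesis unfolding Z_def .
qed

lemma lnorm_norming_weights_ereal:
  fixes r :: real
  assumes "1 < r"
  shows "\<exists>y. (\<forall>i. 0 \<le> y i) \<and> (\<forall>z. (\<Sum>i<m. y i * \<bar>z i\<bar>) \<le> lnorm (ereal r) m z)
             \<and> (\<Sum>i<m. y i * \<bar>u i\<bar>) = lnorm (ereal r) m u"
proof (cases "lnorm (ereal r) m u = 0")
  case True
  then show ?thesis by (intro exI[of _ "\<lambda>_. 0"]) (simp add: lnorm_nonneg)
next
  case False
  define N where "N = lnorm (ereal r) m u"
  have "N > 0" using False lnorm_nonneg[of "ereal r" m u] unfolding N_def by linarith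
  have N_powr: "(\<Sum>i<m. \<bar>u i\<bar> powr r) = N powr r"
    unfolding N_def using assms by (simp add: lnorm_ereal powr_powr sum_nonneg)
  define r' where "r' = r / (r - 1)"
  have r': "1 < r'" "1 / r' + 1 / r = 1" unfolding r'_def using assms by (auto simp: field_simps)
  define y where "y i = (\<bar>u i\<bar> / N) powr (r - 1)" for i
  have "y i powr r' = \<bar>u i\<bar> powr r / N powr r" for i
    unfolding y_def r'_def using assms \<open>N > 0\<close> by (simp add: powr_powr powr_divide)
  then have y_unit: "(\<Sum>i<m. y i powr r') = 1"
    using \<open>N > 0\<close> by (simp add: N_powr flip: sum_divide_distrib)
  have "y i * \<bar>u i\<bar> = N * (\<bar>u i\<bar> powr r / N powr r)" for i
  proof -
    have "(\<bar>u i\<bar> / N) powr (r - 1) * (\<bar>u i\<bar> / N) = (\<bar>u i\<bar> / N) powr r"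
      using \<open>N > 0\<close> by (cases "u i = 0") (simp_all add: powr_add[of _ "r - 1" 1, simplified])
    then show ?thesis
      unfolding y_def using \<open>N > 0\<close> by (simp add: powr_divide field_simps)
  qed
  then have "(\<Sum>i<m. y i * \<bar>u i\<bar>) = N"
    using \<open>N > 0\<close> by (simp add: N_powr flip: sum_distrib_left sum_divide_distrib)
  moreover have "\<forall>i. 0 \<le> y i" unfolding y_def by simp
  ultimately show ?thesis
    using sum_mult_abs_le_lnorm[OF assms r'] y_unit unfolding N_def by blast
qed

lemma lnorm_norming_weights:
  assumes "1 \<le> s"
  shows "\<exists>y. (\<forall>i. 0 \<le> y i) \<and> (\<forall>z. (\<Sum>i<m. y i * \<bar>z i\<bar>) \<le> lnorm s m z)
             \<and> (\<Sum>i<m. y i * \<bar>u i\<bar>) = lnorm s m u"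
proof (cases s)
  case (real r)
  show ?thesis
  proof (cases "r = 1")
    case True
    then show ?thesis using real by (intro exI[of _ "\<lambda>_. 1"]) (simp add: lnorm_ereal)
  next
    case False
    then show ?thesis using assms real lnorm_norming_weights_ereal[of r] by simp
  qed
next
  case PInf
  show ?thesis
  proof (cases "m = 0")
    case True
    then show ?thesis by (intro exI[of _ "\<lambda>_. 0"]) (simp add: PInf lnorm_infinity)
  next
    case False
    then have "Max ((\<lambda>j. \<bar>u j\<bar>) ` {..<m}) \<in> (\<lambda>j. \<bar>u j\<bar>) ` {..<m}"
      by (intro Max_in) auto
    then obtain k where k: "k < m" "\<bar>u k\<bar> = Max ((\<lambda>j. \<bar>u j\<bar>) ` {..<m})"
      by auto
    moreover have "Max (insert 0 ((\<lambda>j. \<bar>u j\<bar>) ` {..<m})) = max 0 (Max ((\<lambda>j. \<bar>u j\<bar>) ` {..<m}))"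
      using False by (intro Max_insert) auto
    ultimately have "lnorm s m u = \<bar>u k\<bar>"
      using PInf by (simp add: lnorm_infinity)
    moreover have "(\<Sum>i<m. (if i = k then 1 else 0) * \<bar>z i\<bar>) = \<bar>z k\<bar>" for z :: "nat \<Rightarrow> real"
    proof -
      have "(\<Sum>i<m. (if i = k then 1 else 0) * \<bar>z i\<bar>) = (\<Sum>i<m. if i = k then \<bar>z k\<bar> else 0)"
        by (intro sum.cong) auto
      then show ?thesis using k by simp
    qed
    ultimately show ?thesis
      using k PInf abs_le_lnorm[of s k m] by (intro exI[of _ "\<lambda>i. if i = k then 1 else 0"]) auto
  qed
qed (use assms in simp)

lemma lnorm_add_le:
  assumes "1 \<le> s"
  shows "lnorm s m (\<lambda>i. u i + w i) \<le> lnorm s m u + lnorm s m w"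
proof -
  obtain y where y: "\<forall>i. 0 \<le> y i" "\<forall>z. (\<Sum>i<m. y i * \<bar>z i\<bar>) \<le> lnorm s m z"
      "(\<Sum>i<m. y i * \<bar>u i + w i\<bar>) = lnorm s m (\<lambda>i. u i + w i)"
    using lnorm_norming_weights[OF assms, of m "\<lambda>i. u i + w i"] by blast
  have "(\<Sum>i<m. y i * \<bar>u i + w i\<bar>) \<le> (\<Sum>i<m. y i * \<bar>u i\<bar> + y i * \<bar>w i\<bar>)"
    using y(1) by (intro sum_mono) (simp add: abs_triangle_ineq mult_left_mono flip: distrib_left)
  also have "\<dots> \<le> lnorm s m u + lnorm s m w"
    using y(2) by (simp add: sum.distrib add_mono)
  finally show ?thesis using y(3) by simp
qed

lemma lnorm_le_sum_abs:
  assumes "1 \<le> s"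
  shows "lnorm s m z \<le> (\<Sum>i<m. \<bar>z i\<bar>)"
proof -
  obtain y where y: "\<forall>i. 0 \<le> y i" "\<forall>z. (\<Sum>i<m. y i * \<bar>z i\<bar>) \<le> lnorm s m z"
      "(\<Sum>i<m. y i * \<bar>z i\<bar>) = lnorm s m z"
    using lnorm_norming_weights[OF assms] by blast
  have unit: "lnorm s m (\<lambda>j. if j = i then 1 else 0) \<le> 1" for i
  proof (cases s)
    case (real r)
    have "(\<Sum>j<m. \<bar>if j = i then 1 else 0 :: real\<bar> powr r) = (\<Sum>j<m. if j = i then 1 else 0)"
      by (intro sum.cong) auto
    then show ?thesis using assms real by (simp add: lnorm_ereal powr_le1 sum_nonneg)
  next
    case PInf
    then show ?thesis by (auto simp: lnorm_infinity intro!: Max.boundedI)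
  qed (use assms in simp)
  have "y i \<le> 1" if "i < m" for i
  proof -
    have "(\<Sum>k<m. y k * \<bar>if k = i then 1 else 0\<bar>) = (\<Sum>k<m. if k = i then y i else 0)"
      by (intro sum.cong) auto
    also have "\<dots> = y i" using that by simp
    finally show ?thesis using y(2) unit[of i] by (metis order.trans)
  qed
  then have "(\<Sum>i<m. y i * \<bar>z i\<bar>) \<le> (\<Sum>i<m. \<bar>z i\<bar>)"
    using y(1) by (intro sum_mono) (simp add: mult_left_le_one_le)
  then show ?thesis using y(3) by simp
qed

lemma opnorm_le:
  assumes "\<And>x. lnorm s n x \<le> 1 \<Longrightarrow> \<forall>j\<ge>n. x j = 0 \<Longrightarrow> lnorm t m (\<lambda>i. \<Sum>j<n. B i j * x j) \<le> R"
  shows "opnorm s t m n B \<le> R"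
  unfolding opnorm_def
proof (rule cSup_least)
  show "{lnorm t m (\<lambda>i. \<Sum>j<n. B i j * x j) | x. lnorm s n x \<le> 1 \<and> (\<forall>j\<ge>n. x j = 0)} \<noteq> {}"
  proof -
    have "lnorm s n (\<lambda>_. 0) \<le> 1 \<and> (\<forall>j\<ge>n. (\<lambda>_. 0 :: real) j = 0)" by (simp add: lnorm_zero)
    then show ?thesis by blast
  qed
qed (use assms in auto)

lemma lnorm_mat_mult_le_sum_abs:
  assumes "1 \<le> p" "1 \<le> q" "lnorm p n x \<le> 1"
  shows "lnorm q m (\<lambda>i. \<Sum>j<n. B i j * x j) \<le> (\<Sum>i<m. \<Sum>j<n. \<bar>B i j\<bar>)"
proof -
  have "0 < p" using assms(1) by (cases p) auto
  then have x_le_1: "\<bar>x j\<bar> \<le> 1" if "j < n" for j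
    using abs_le_lnorm[of p j n x] assms(3) that by simp
  have "lnorm q m (\<lambda>i. \<Sum>j<n. B i j * x j) \<le> (\<Sum>i<m. \<bar>\<Sum>j<n. B i j * x j\<bar>)"
    by (rule lnorm_le_sum_abs[OF assms(2)])
  also have "\<dots> \<le> (\<Sum>i<m. \<Sum>j<n. \<bar>B i j\<bar>)"
  proof (intro sum_mono)
    fix i
    have "\<bar>\<Sum>j<n. B i j * x j\<bar> \<le> (\<Sum>j<n. \<bar>B i j * x j\<bar>)"
      by (rule sum_abs)
    also have "\<dots> \<le> (\<Sum>j<n. \<bar>B i j\<bar>)"
      using x_le_1 by (intro sum_mono) (simp add: abs_mult mult_left_le)
    finally show "\<bar>\<Sum>j<n. B i j * x j\<bar> \<le> (\<Sum>j<n. \<bar>B i j\<bar>)" .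
  qed
  finally show ?thesis .
qed

lemma opnorm_le_sum_abs:
  assumes "1 \<le> p" "1 \<le> q"
  shows "opnorm p q m n B \<le> (\<Sum>i<m. \<Sum>j<n. \<bar>B i j\<bar>)"
  using lnorm_mat_mult_le_sum_abs[OF assms] by (intro opnorm_le)

lemma lnorm_le_opnorm:
  assumes "1 \<le> p" "1 \<le> q" "lnorm p n x \<le> 1" "\<forall>j\<ge>n. x j = 0"
  shows "lnorm q m (\<lambda>i. \<Sum>j<n. B i j * x j) \<le> opnorm p q m n B"
  unfolding opnorm_def
proof (rule cSup_upper)
  show "bdd_above {lnorm q m (\<lambda>i. \<Sum>j<n. B i j * x j) | x. lnorm p n x \<le> 1 \<and> (\<forall>j\<ge>n. x j = 0)}"
    using lnorm_mat_mult_le_sum_abs[OF assms(1,2)] by (intro bdd_aboveI) blast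
qed (use assms in blast)

lemma opnorm_nonneg:
  assumes "1 \<le> p" "1 \<le> q"
  shows "0 \<le> opnorm p q m n B"
  using lnorm_le_opnorm[OF assms, of n "\<lambda>_. 0" m B] by (simp add: lnorm_zero)

lemma opnorm_cong:
  assumes "\<And>i j. i < m \<Longrightarrow> j < n \<Longrightarrow> B i j = B' i j"
  shows "opnorm s t m n B = opnorm s t m n B'"
proof -
  have "lnorm t m (\<lambda>i. \<Sum>j<n. B i j * x j) = lnorm t m (\<lambda>i. \<Sum>j<n. B' i j * x j)" for x
    using assms by (intro lnorm_cong sum.cong) auto
  then show ?thesis unfolding opnorm_def by simp
qed

lemma opnorm_le_add_sum_abs_diff:
  assumes "1 \<le> p" "1 \<le> q"
  shows "opnorm p q m n B \<le> opnorm p q m n B' + (\<Sum>i<m. \<Sum>j<n. \<bar>B i j - B' i j\<bar>)"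
proof (rule opnorm_le)
  fix x assume x: "lnorm p n x \<le> 1" "\<forall>j\<ge>n. x j = 0"
  have "(\<lambda>i. \<Sum>j<n. B i j * x j) = (\<lambda>i. (\<Sum>j<n. B' i j * x j) + (\<Sum>j<n. (B i j - B' i j) * x j))"
    by (simp add: sum.distrib[symmetric] algebra_simps)
  then have "lnorm q m (\<lambda>i. \<Sum>j<n. B i j * x j)
      \<le> lnorm q m (\<lambda>i. \<Sum>j<n. B' i j * x j) + lnorm q m (\<lambda>i. \<Sum>j<n. (B i j - B' i j) * x j)"
    using lnorm_add_le[OF assms(2)] by simp
  also have "\<dots> \<le> opnorm p q m n B' + (\<Sum>i<m. \<Sum>j<n. \<bar>B i j - B' i j\<bar>)"
    using lnorm_le_opnorm[OF assms x] lnorm_mat_mult_le_sum_abs[OF assms x(1)] by (rule add_mono)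
  finally show "lnorm q m (\<lambda>i. \<Sum>j<n. B i j * x j)
      \<le> opnorm p q m n B' + (\<Sum>i<m. \<Sum>j<n. \<bar>B i j - B' i j\<bar>)" .
qed

lemma continuous_on_opnorm:
  assumes "1 \<le> p" "1 \<le> q"
  shows "continuous_on UNIV (opnorm p q m n)"
proof -
  have "isCont (opnorm p q m n) B0" for B0
  proof -
    define d where "d B = (\<Sum>i<m. \<Sum>j<n. \<bar>B i j - B0 i j\<bar>)" for B :: "nat \<Rightarrow> nat \<Rightarrow> real"
    have "continuous_on UNIV (\<lambda>B::nat \<Rightarrow> nat \<Rightarrow> real. B i j)" for i j
      by (rule continuous_on_product_then_coordinatewise[OF continuous_on_product_coordinates])
    then have "continuous_on UNIV d"
      unfolding d_def by (intro continuous_on_sum continuous_on_rabs continuous_on_diff continuous_on_const)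
    then have "(d \<longlongrightarrow> d B0) (at B0)" by (simp add: continuous_on_def)
    then have d_tendsto: "(d \<longlongrightarrow> 0) (at B0)" unfolding d_def by simp
    have "norm (opnorm p q m n B - opnorm p q m n B0) \<le> d B" for B
      using opnorm_le_add_sum_abs_diff[OF assms, of m n B B0]
        opnorm_le_add_sum_abs_diff[OF assms, of m n B0 B]
      unfolding d_def by (simp add: abs_minus_commute)
    then have "((\<lambda>B. opnorm p q m n B - opnorm p q m n B0) \<longlongrightarrow> 0) (at B0)"
      by (intro Lim_null_comparison[OF _ d_tendsto] always_eventually allI)
    then show ?thesis unfolding isCont_def by (simp add: LIM_zero_iff)
  qed
  then show ?thesis by (simp add: continuous_at_imp_continuous_on)
qed

lemma borel_measurable_opnorm:
  assumes "1 \<le> p" "1 \<le> q" "\<And>i j. i < m \<Longrightarrow> j < n \<Longrightarrow> F i j \<in> borel_measurable M"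
  shows "(\<lambda>\<omega>. opnorm p q m n (\<lambda>i j. F i j \<omega>)) \<in> borel_measurable M"
proof -
  text \<open>Zeroing the entries outside the m \<times> n block makes every coordinate measurable.\<close>
  define F' where "F' \<omega> = (\<lambda>i j. if i < m \<and> j < n then F i j \<omega> else 0)" for \<omega>
  have "(\<lambda>\<omega>. F' \<omega> i j) \<in> borel_measurable M" for i j
    unfolding F'_def using assms(3) by (cases "i < m \<and> j < n") auto
  then have "F' \<in> borel_measurable M"
    by (intro measurable_coordinatewise_then_product)
  then have "(\<lambda>\<omega>. opnorm p q m n (F' \<omega>)) \<in> borel_measurable M"
    by (rule borel_measurable_continuous_on[OF continuous_on_opnorm[OF assms(1,2)]])
  moreover have "opnorm p q m n (F' \<omega>) = opnorm p q m n (\<lambda>i j. F i j \<omega>)" for \<omega>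
    unfolding F'_def by (rule opnorm_cong) auto
  ultimately show ?thesis by simp
qed

lemma sqrt_opnorm_square_entries_le:
  fixes A :: "nat \<Rightarrow> nat \<Rightarrow> real"
  assumes "1 \<le> p" "1 \<le> q"
    and row_norms: "\<And>x. lnorm p n x \<le> 1 \<Longrightarrow> \<forall>j\<ge>n. x j = 0
                    \<Longrightarrow> lnorm q m (\<lambda>i. sqrt (\<Sum>j<n. (A i j * x j)\<^sup>2)) \<le> R"
  shows "sqrt (opnorm (p / 2) (q / 2) m n (\<lambda>i j. (A i j)\<^sup>2)) \<le> R"
proof -
  have "0 < p" using assms(1) by (cases p) auto
  have "0 < q" "0 < q / 2" using assms(2) by (cases q; simp)+
  have "0 \<le> R"
    using row_norms[of "\<lambda>_. 0"] lnorm_nonneg[of q m] by (simp add: lnorm_zero order_trans)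
  have "opnorm (p / 2) (q / 2) m n (\<lambda>i j. (A i j)\<^sup>2) \<le> R\<^sup>2"
  proof (rule opnorm_le)
    fix z assume z: "lnorm (p / 2) n z \<le> 1" "\<forall>j\<ge>n. z j = 0"
    define x where "x j = (if j < n then sqrt \<bar>z j\<bar> else 0)" for j
    have "lnorm p n x = lnorm p n (\<lambda>j. sqrt \<bar>z j\<bar>)"
      unfolding x_def by (rule lnorm_cong) simp
    also have "\<dots> = sqrt (lnorm (p / 2) n z)"
      using lnorm_sqrt[OF \<open>0 < p\<close>, of n "\<lambda>j. \<bar>z j\<bar>"] by (simp add: lnorm_abs)
    finally have "lnorm p n x \<le> 1" using z(1) by simp
    then have "lnorm q m (\<lambda>i. sqrt (\<Sum>j<n. (A i j * x j)\<^sup>2)) \<le> R"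
      by (rule row_norms) (simp add: x_def)
    moreover have "(\<Sum>j<n. (A i j * x j)\<^sup>2) = (\<Sum>j<n. (A i j)\<^sup>2 * \<bar>z j\<bar>)" for i
      unfolding x_def by (intro sum.cong) (auto simp: power_mult_distrib)
    ultimately have "sqrt (lnorm (q / 2) m (\<lambda>i. \<Sum>j<n. (A i j)\<^sup>2 * \<bar>z j\<bar>)) \<le> R"
      using lnorm_sqrt[OF \<open>0 < q\<close>, of m "\<lambda>i. \<Sum>j<n. (A i j)\<^sup>2 * \<bar>z j\<bar>"] by (simp add: sum_nonneg)
    also have "R = sqrt (R\<^sup>2)" using \<open>0 \<le> R\<close> by simp
    finally have "lnorm (q / 2) m (\<lambda>i. \<Sum>j<n. (A i j)\<^sup>2 * \<bar>z j\<bar>) \<le> R\<^sup>2"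
      by (simp only: real_sqrt_le_iff)
    moreover have "lnorm (q / 2) m (\<lambda>i. \<Sum>j<n. (A i j)\<^sup>2 * z j)
        \<le> lnorm (q / 2) m (\<lambda>i. \<Sum>j<n. (A i j)\<^sup>2 * \<bar>z j\<bar>)"
      using \<open>0 < q / 2\<close> by (rule lnorm_nonneg_mat_mult_le_abs) simp
    ultimately show "lnorm (q / 2) m (\<lambda>i. \<Sum>j<n. (A i j)\<^sup>2 * z j) \<le> R\<^sup>2" by simp
  qed
  then show ?thesis by (rule real_le_lsqrt[OF \<open>0 \<le> R\<close>])
qed

section \<open>Khintchine-type lower bounds for independent mean-zero variables\<close>

lemma sum_mult_abs_le_sqrt_sum_sq:
  fixes u y :: "'i \<Rightarrow> real"
  assumes "(\<Sum>i\<in>I. (u i)\<^sup>2) = 1"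
  shows "(\<Sum>i\<in>I. u i * \<bar>y i\<bar>) \<le> sqrt (\<Sum>i\<in>I. (y i)\<^sup>2)"
proof (rule real_le_rsqrt)
  have "(\<Sum>i\<in>I. u i * \<bar>y i\<bar>)\<^sup>2 \<le> (\<Sum>i\<in>I. (u i)\<^sup>2) * (\<Sum>i\<in>I. \<bar>y i\<bar>\<^sup>2)"
    by (rule Cauchy_Schwarz_ineq_sum)
  then show "(\<Sum>i\<in>I. u i * \<bar>y i\<bar>)\<^sup>2 \<le> (\<Sum>i\<in>I. (y i)\<^sup>2)" using assms by simp
qed

lemma integrable_sqrt_sum_sq:
  fixes Y :: "'i \<Rightarrow> 'a \<Rightarrow> real"
  assumes "\<And>i. i \<in> I \<Longrightarrow> integrable M (Y i)"
  shows "integrable M (\<lambda>\<omega>. sqrt (\<Sum>i\<in>I. (Y i \<omega>)\<^sup>2))"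
proof (rule Bochner_Integration.integrable_bound)
  show "integrable M (\<lambda>\<omega>. \<Sum>i\<in>I. \<bar>Y i \<omega>\<bar>)"
    using assms by (intro Bochner_Integration.integrable_sum integrable_abs) auto
  have [measurable]: "Y i \<in> borel_measurable M" if "i \<in> I" for i
    using assms[OF that] by auto
  show "(\<lambda>\<omega>. sqrt (\<Sum>i\<in>I. (Y i \<omega>)\<^sup>2)) \<in> borel_measurable M" by measurable
  show "AE \<omega> in M. norm (sqrt (\<Sum>i\<in>I. (Y i \<omega>)\<^sup>2)) \<le> norm (\<Sum>i\<in>I. \<bar>Y i \<omega>\<bar>)"
  proof (intro AE_I2)
    fix \<omega>
    have "L2_set (\<lambda>i. \<bar>Y i \<omega>\<bar>) I \<le> (\<Sum>i\<in>I. \<bar>Y i \<omega>\<bar>)"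
      by (rule L2_set_le_sum) auto
    then show "norm (sqrt (\<Sum>i\<in>I. (Y i \<omega>)\<^sup>2)) \<le> norm (\<Sum>i\<in>I. \<bar>Y i \<omega>\<bar>)"
      unfolding L2_set_def by (simp add: sum_nonneg)
  qed
qed

context prob_space
begin

lemma indep_var_sum_disjoint:
  fixes Y :: "'i \<Rightarrow> 'a \<Rightarrow> real"
  assumes "indep_vars (\<lambda>_. borel) Y I" "A \<inter> B = {}" "A \<subseteq> I" "B \<subseteq> I"
  shows "indep_var borel (\<lambda>\<omega>. \<Sum>i\<in>A. Y i \<omega>) borel (\<lambda>\<omega>. \<Sum>i\<in>B. Y i \<omega>)"
proof -
  have "indep_var
    borel ((\<lambda>f. \<Sum>i\<in>A. f i) \<circ> (\<lambda>\<omega>. restrict (\<lambda>i. Y i \<omega>) A))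
    borel ((\<lambda>f. \<Sum>i\<in>B. f i) \<circ> (\<lambda>\<omega>. restrict (\<lambda>i. Y i \<omega>) B))"
    using assms by (intro indep_var_compose[OF indep_var_restrict]) auto
  also have "((\<lambda>f. \<Sum>i\<in>A. f i) \<circ> (\<lambda>\<omega>. restrict (\<lambda>i. Y i \<omega>) A)) = (\<lambda>\<omega>. \<Sum>i\<in>A. Y i \<omega>)"
    by (auto cong: rev_conj_cong)
  also have "((\<lambda>f. \<Sum>i\<in>B. f i) \<circ> (\<lambda>\<omega>. restrict (\<lambda>i. Y i \<omega>) B)) = (\<lambda>\<omega>. \<Sum>i\<in>B. Y i \<omega>)"
    by (auto cong: rev_conj_cong)
  finally show ?thesis .
qed

text \<open>Write |U| = sgn U * (U + V) - sgn U * V; the last term has mean 0 by independence.\<close>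
lemma expectation_abs_le_abs_add:
  fixes U V :: "'a \<Rightarrow> real"
  assumes indep: "indep_var borel U borel V" and "integrable M U" "integrable M V"
    and "expectation V = 0"
  shows "expectation (\<lambda>\<omega>. \<bar>U \<omega>\<bar>) \<le> expectation (\<lambda>\<omega>. \<bar>U \<omega> + V \<omega>\<bar>)"
proof -
  have "indep_var borel (sgn \<circ> U) borel ((\<lambda>x. x) \<circ> V)"
    by (rule indep_var_compose[OF indep]) measurable
  then have indep_sgn: "indep_var borel (\<lambda>\<omega>. sgn (U \<omega>)) borel V"
    by (simp add: comp_def)
  have int_sgn: "integrable M (\<lambda>\<omega>. sgn (U \<omega>))"
    using indep_var_rv1[OF indep]
    by (intro integrable_const_bound[where B=1]) (auto simp: sgn_real_def)
  have int_sgn_V: "integrable M (\<lambda>\<omega>. sgn (U \<omega>) * V \<omega>)"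
    by (rule indep_var_integrable[OF indep_sgn int_sgn assms(3)])
  have mean_sgn_V: "expectation (\<lambda>\<omega>. sgn (U \<omega>) * V \<omega>) = 0"
    using indep_var_lebesgue_integral[OF indep_sgn int_sgn assms(3)] assms(4) by simp
  have sgn_add: "sgn (U \<omega>) * (U \<omega> + V \<omega>) = \<bar>U \<omega>\<bar> + sgn (U \<omega>) * V \<omega>" for \<omega>
    by (simp add: distrib_left abs_real_def sgn_real_def)
  have int_sgn_add: "integrable M (\<lambda>\<omega>. sgn (U \<omega>) * (U \<omega> + V \<omega>))"
    unfolding sgn_add using assms(2) int_sgn_V by auto
  have "expectation (\<lambda>\<omega>. \<bar>U \<omega>\<bar>) = expectation (\<lambda>\<omega>. sgn (U \<omega>) * (U \<omega> + V \<omega>))"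
    using assms(2) int_sgn_V mean_sgn_V by (simp add: sgn_add)
  also have "\<dots> \<le> expectation (\<lambda>\<omega>. \<bar>U \<omega> + V \<omega>\<bar>)"
  proof (rule integral_mono[OF int_sgn_add])
    show "integrable M (\<lambda>\<omega>. \<bar>U \<omega> + V \<omega>\<bar>)" using assms(2,3) by auto
    show "sgn (U \<omega>) * (U \<omega> + V \<omega>) \<le> \<bar>U \<omega> + V \<omega>\<bar>" for \<omega>
      by (simp add: sgn_real_def abs_real_def)
  qed
  finally show ?thesis .
qed

lemma expectation_abs_sum_subset_le:
  fixes Y :: "'i \<Rightarrow> 'a \<Rightarrow> real"
  assumes indep: "indep_vars (\<lambda>_. borel) Y I" and "finite I" "B \<subseteq> I"
    and int: "\<And>i. i \<in> I \<Longrightarrow> integrable M (Y i)" and "\<And>i. i \<in> I \<Longrightarrow> expectation (Y i) = 0"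
  shows "expectation (\<lambda>\<omega>. \<bar>\<Sum>i\<in>B. Y i \<omega>\<bar>) \<le> expectation (\<lambda>\<omega>. \<bar>\<Sum>i\<in>I. Y i \<omega>\<bar>)"
proof -
  have "(\<Sum>i\<in>I. Y i \<omega>) = (\<Sum>i\<in>B. Y i \<omega>) + (\<Sum>i\<in>I - B. Y i \<omega>)" for \<omega>
    using assms(2,3) by (metis add.commute sum.subset_diff)
  moreover have "expectation (\<lambda>\<omega>. \<bar>\<Sum>i\<in>B. Y i \<omega>\<bar>)
      \<le> expectation (\<lambda>\<omega>. \<bar>(\<Sum>i\<in>B. Y i \<omega>) + (\<Sum>i\<in>I - B. Y i \<omega>)\<bar>)"
    using assms int
    by (intro expectation_abs_le_abs_add indep_var_sum_disjoint[OF indep])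
      (auto simp: Bochner_Integration.integral_sum)
  ultimately show ?thesis by simp
qed

lemma expectation_abs_signed_sum_le:
  fixes Y :: "'i \<Rightarrow> 'a \<Rightarrow> real"
  assumes indep: "indep_vars (\<lambda>_. borel) Y I" and "finite I" "T \<subseteq> I"
    and int: "\<And>i. i \<in> I \<Longrightarrow> integrable M (Y i)" and mean: "\<And>i. i \<in> I \<Longrightarrow> expectation (Y i) = 0"
  shows "expectation (\<lambda>\<omega>. \<bar>signed_sum I (\<lambda>i. Y i \<omega>) T\<bar>) \<le> 2 * expectation (\<lambda>\<omega>. \<bar>\<Sum>i\<in>I. Y i \<omega>\<bar>)"
proof -
  have signed_sum_eq: "signed_sum I (\<lambda>i. Y i \<omega>) T = (\<Sum>i\<in>I - T. Y i \<omega>) - (\<Sum>i\<in>T. Y i \<omega>)" for \<omega>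
  proof -
    have "signed_sum I (\<lambda>i. Y i \<omega>) T = (\<Sum>i\<in>I. if i \<in> T then - Y i \<omega> else Y i \<omega>)"
      unfolding signed_sum_def by (intro sum.cong) (auto simp: walsh_singleton)
    also have "\<dots> = (\<Sum>i\<in>I - T. Y i \<omega>) - (\<Sum>i\<in>T. Y i \<omega>)"
      using assms(2,3) by (simp add: sum.If_cases Int_absorb1 Diff_eq Int_commute sum_negf)
    finally show ?thesis .
  qed
  have int_diff: "integrable M (\<lambda>\<omega>. \<Sum>i\<in>I - T. Y i \<omega>)" and int_T: "integrable M (\<lambda>\<omega>. \<Sum>i\<in>T. Y i \<omega>)"
    using int assms(3) by auto
  have "expectation (\<lambda>\<omega>. \<bar>signed_sum I (\<lambda>i. Y i \<omega>) T\<bar>)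
      \<le> expectation (\<lambda>\<omega>. \<bar>\<Sum>i\<in>I - T. Y i \<omega>\<bar> + \<bar>\<Sum>i\<in>T. Y i \<omega>\<bar>)"
    unfolding signed_sum_eq using int_diff int_T by (intro integral_mono) auto
  also have "\<dots> = expectation (\<lambda>\<omega>. \<bar>\<Sum>i\<in>I - T. Y i \<omega>\<bar>) + expectation (\<lambda>\<omega>. \<bar>\<Sum>i\<in>T. Y i \<omega>\<bar>)"
    using int_diff int_T by (intro Bochner_Integration.integral_add) auto
  also have "\<dots> \<le> 2 * expectation (\<lambda>\<omega>. \<bar>\<Sum>i\<in>I. Y i \<omega>\<bar>)"
    using expectation_abs_sum_subset_le[OF indep assms(2) _ int mean, of "I - T"]
      expectation_abs_sum_subset_le[OF indep assms(2,3) int mean]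
    by simp
  finally show ?thesis .
qed

text \<open>Average Szarek's inequality over \<omega> and compare each fixed sign pattern with the plain sum.\<close>
lemma expectation_sqrt_sum_sq_le:
  fixes Y :: "'i \<Rightarrow> 'a \<Rightarrow> real"
  assumes indep: "indep_vars (\<lambda>_. borel) Y I" and fin: "finite I"
    and int: "\<And>i. i \<in> I \<Longrightarrow> integrable M (Y i)" and mean: "\<And>i. i \<in> I \<Longrightarrow> expectation (Y i) = 0"
  shows "expectation (\<lambda>\<omega>. sqrt (\<Sum>i\<in>I. (Y i \<omega>)\<^sup>2)) \<le> 2 * sqrt 2 * expectation (\<lambda>\<omega>. \<bar>\<Sum>i\<in>I. Y i \<omega>\<bar>)"
proof -
  define K :: real where "K = 2 ^ card I"
  have "K > 0" unfolding K_def by simp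
  have int_signed: "integrable M (\<lambda>\<omega>. \<bar>signed_sum I (\<lambda>i. Y i \<omega>) T\<bar>)" for T
    unfolding signed_sum_def using int
    by (intro integrable_abs Bochner_Integration.integrable_sum integrable_mult_right) auto
  have "K / sqrt 2 * expectation (\<lambda>\<omega>. sqrt (\<Sum>i\<in>I. (Y i \<omega>)\<^sup>2))
      = expectation (\<lambda>\<omega>. K * sqrt (\<Sum>i\<in>I. (Y i \<omega>)\<^sup>2) / sqrt 2)"
    by simp
  also have "\<dots> \<le> expectation (\<lambda>\<omega>. \<Sum>T\<in>Pow I. \<bar>signed_sum I (\<lambda>i. Y i \<omega>) T\<bar>)"
    using szarek_inequality[OF fin] integrable_sqrt_sum_sq[of I M Y, OF int] int_signed
    unfolding K_def by (intro integral_mono Bochner_Integration.integrable_sum) auto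
  also have "\<dots> = (\<Sum>T\<in>Pow I. expectation (\<lambda>\<omega>. \<bar>signed_sum I (\<lambda>i. Y i \<omega>) T\<bar>))"
    using int_signed by (intro Bochner_Integration.integral_sum) auto
  also have "\<dots> \<le> (\<Sum>T\<in>Pow I. 2 * expectation (\<lambda>\<omega>. \<bar>\<Sum>i\<in>I. Y i \<omega>\<bar>))"
    by (intro sum_mono expectation_abs_signed_sum_le[OF indep fin _ int mean]) auto
  also have "\<dots> = K * (2 * expectation (\<lambda>\<omega>. \<bar>\<Sum>i\<in>I. Y i \<omega>\<bar>))"
    unfolding K_def using fin by (simp add: card_Pow)
  finally show ?thesis
    using \<open>K > 0\<close> by (simp add: field_simps)
qed

lemma expectation_abs_weighted_sum_ge:
  fixes X :: "'i \<Rightarrow> 'a \<Rightarrow> real" and b :: "'i \<Rightarrow> real"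
  assumes indep: "indep_vars (\<lambda>_. borel) X I" and fin: "finite I"
    and int: "\<And>i. i \<in> I \<Longrightarrow> integrable M (X i)" and mean: "\<And>i. i \<in> I \<Longrightarrow> expectation (X i) = 0"
    and lower: "\<And>i. i \<in> I \<Longrightarrow> c \<le> expectation (\<lambda>\<omega>. \<bar>X i \<omega>\<bar>)"
  shows "c * sqrt (\<Sum>i\<in>I. (b i)\<^sup>2) \<le> 2 * sqrt 2 * expectation (\<lambda>\<omega>. \<bar>\<Sum>i\<in>I. b i * X i \<omega>\<bar>)"
proof (cases "(\<Sum>i\<in>I. (b i)\<^sup>2) = 0")
  case True
  then show ?thesis by simp
next
  case False
  moreover have "0 \<le> (\<Sum>i\<in>I. (b i)\<^sup>2)" by (simp add: sum_nonneg)
  ultimately have pos: "0 < (\<Sum>i\<in>I. (b i)\<^sup>2)" by simp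
  define Y where "Y i \<omega> = b i * X i \<omega>" for i \<omega>
  define w where "w = sqrt (\<Sum>i\<in>I. (b i)\<^sup>2)"
  have w_sq: "w\<^sup>2 = (\<Sum>i\<in>I. (b i)\<^sup>2)" and "w > 0"
    using pos unfolding w_def by simp_all
  have int_Y: "integrable M (Y i)" if "i \<in> I" for i unfolding Y_def using int[OF that] by simp
  have unit: "(\<Sum>i\<in>I. (\<bar>b i\<bar> / w)\<^sup>2) = 1"
    using \<open>w > 0\<close> pos by (simp add: power_divide w_sq flip: sum_divide_distrib)
  have term_eq: "\<bar>b i\<bar> / w * (\<bar>b i\<bar> * c) = c / w * (b i)\<^sup>2" for i
    by (simp add: power2_eq_square)
  have "c * w = c / w * w\<^sup>2"
    using \<open>w > 0\<close> by (simp add: power2_eq_square)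
  also have "\<dots> = (\<Sum>i\<in>I. \<bar>b i\<bar> / w * (\<bar>b i\<bar> * c))"
    by (simp only: w_sq term_eq sum_distrib_left)
  also have "\<dots> \<le> (\<Sum>i\<in>I. \<bar>b i\<bar> / w * expectation (\<lambda>\<omega>. \<bar>Y i \<omega>\<bar>))"
    using lower \<open>w > 0\<close> unfolding Y_def
    by (intro sum_mono mult_left_mono) (auto simp: abs_mult intro: mult_left_mono)
  also have "\<dots> = expectation (\<lambda>\<omega>. \<Sum>i\<in>I. \<bar>b i\<bar> / w * \<bar>Y i \<omega>\<bar>)"
    using int_Y by (subst Bochner_Integration.integral_sum) auto
  also have "\<dots> \<le> expectation (\<lambda>\<omega>. sqrt (\<Sum>i\<in>I. (Y i \<omega>)\<^sup>2))"
    using int_Y sum_mult_abs_le_sqrt_sum_sq[OF unit] integrable_sqrt_sum_sq[of I M Y, OF int_Y]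
    by (intro integral_mono) auto
  also have "\<dots> \<le> 2 * sqrt 2 * expectation (\<lambda>\<omega>. \<bar>\<Sum>i\<in>I. Y i \<omega>\<bar>)"
  proof (rule expectation_sqrt_sum_sq_le[OF _ fin int_Y])
    show "indep_vars (\<lambda>_. borel) Y I"
      unfolding Y_def by (rule indep_vars_compose2[OF indep]) measurable
    show "expectation (Y i) = 0" if "i \<in> I" for i
      unfolding Y_def using mean[OF that] by simp
  qed
  finally show ?thesis unfolding w_def Y_def .
qed

lemma expectation_abs_row_sum_ge:
  fixes X :: "nat \<Rightarrow> nat \<Rightarrow> 'a \<Rightarrow> real"
  assumes indep: "indep_vars (\<lambda>_. borel) (\<lambda>(i, j). X i j) ({..<m} \<times> {..<n})" and "i < m"
    and int: "\<And>i j. i < m \<Longrightarrow> j < n \<Longrightarrow> integrable M (X i j)"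
    and mean: "\<And>i j. i < m \<Longrightarrow> j < n \<Longrightarrow> expectation (X i j) = 0"
    and lower: "\<And>i j. i < m \<Longrightarrow> j < n \<Longrightarrow> c \<le> expectation (\<lambda>\<omega>. \<bar>X i j \<omega>\<bar>)"
  shows "c * sqrt (\<Sum>j<n. (b j)\<^sup>2) \<le> 2 * sqrt 2 * expectation (\<lambda>\<omega>. \<bar>\<Sum>j<n. b j * X i j \<omega>\<bar>)"
proof -
  let ?row = "Pair i ` {..<n}"
  have "indep_vars (\<lambda>_. borel) (\<lambda>(i, j). X i j) ?row"
    using assms(2) by (intro indep_vars_subset[OF indep]) auto
  then have "c * sqrt (\<Sum>k\<in>?row. (b (snd k))\<^sup>2)
      \<le> 2 * sqrt 2 * expectation (\<lambda>\<omega>. \<bar>\<Sum>k\<in>?row. b (snd k) * (\<lambda>(i, j). X i j) k \<omega>\<bar>)"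
    by (rule expectation_abs_weighted_sum_ge) (use assms(2) int mean lower in auto)
  moreover have "inj_on (Pair i) {..<n}" by (simp add: inj_on_def)
  ultimately show ?thesis by (simp add: sum.reindex)
qed

lemma integrable_opnorm:
  assumes "1 \<le> p" "1 \<le> q" "\<And>i j. i < m \<Longrightarrow> j < n \<Longrightarrow> integrable M (X i j)"
  shows "integrable M (\<lambda>\<omega>. opnorm p q m n (\<lambda>i j. A i j * X i j \<omega>))"
proof (rule Bochner_Integration.integrable_bound)
  show "integrable M (\<lambda>\<omega>. \<Sum>i<m. \<Sum>j<n. \<bar>A i j * X i j \<omega>\<bar>)"
    using assms(3) by (intro Bochner_Integration.integrable_sum integrable_abs integrable_mult_right) auto
  show "(\<lambda>\<omega>. opnorm p q m n (\<lambda>i j. A i j * X i j \<omega>)) \<in> borel_measurable M"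
    using assms by (intro borel_measurable_opnorm) auto
  show "AE \<omega> in M. norm (opnorm p q m n (\<lambda>i j. A i j * X i j \<omega>))
      \<le> norm (\<Sum>i<m. \<Sum>j<n. \<bar>A i j * X i j \<omega>\<bar>)"
    using opnorm_nonneg[OF assms(1,2)] opnorm_le_sum_abs[OF assms(1,2)]
    by (intro AE_I2) (simp add: sum_nonneg)
qed

lemma expectation_opnorm_ge_row_norms:
  fixes X :: "nat \<Rightarrow> nat \<Rightarrow> 'a \<Rightarrow> real"
  assumes indep: "indep_vars (\<lambda>_. borel) (\<lambda>(i, j). X i j) ({..<m} \<times> {..<n})"
    and int: "\<And>i j. i < m \<Longrightarrow> j < n \<Longrightarrow> integrable M (X i j)"
    and mean: "\<And>i j. i < m \<Longrightarrow> j < n \<Longrightarrow> expectation (X i j) = 0"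
    and lower: "\<And>i j. i < m \<Longrightarrow> j < n \<Longrightarrow> c \<le> expectation (\<lambda>\<omega>. \<bar>X i j \<omega>\<bar>)"
    and pq: "1 \<le> p" "1 \<le> q" and x: "lnorm p n x \<le> 1" "\<forall>j\<ge>n. x j = 0"
  shows "c * lnorm q m (\<lambda>i. sqrt (\<Sum>j<n. (A i j * x j)\<^sup>2))
       \<le> 2 * sqrt 2 * expectation (\<lambda>\<omega>. opnorm p q m n (\<lambda>i j. A i j * X i j \<omega>))"
proof -
  define w where "w i = sqrt (\<Sum>j<n. (A i j * x j)\<^sup>2)" for i
  define v where "v i \<omega> = (\<Sum>j<n. A i j * X i j \<omega> * x j)" for i \<omega>
  obtain y where y: "\<forall>i. 0 \<le> y i" "\<forall>u. (\<Sum>i<m. y i * \<bar>u i\<bar>) \<le> lnorm q m u"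
      "(\<Sum>i<m. y i * \<bar>w i\<bar>) = lnorm q m w"
    using lnorm_norming_weights[OF pq(2), of m w] by blast
  have int_v: "integrable M (\<lambda>\<omega>. \<bar>v i \<omega>\<bar>)" if "i < m" for i
    unfolding v_def using int that by (intro integrable_abs Bochner_Integration.integrable_sum) auto
  have row: "c * w i \<le> 2 * sqrt 2 * expectation (\<lambda>\<omega>. \<bar>v i \<omega>\<bar>)" if "i < m" for i
    using expectation_abs_row_sum_ge[OF indep that int mean lower, of "\<lambda>j. A i j * x j"]
    unfolding w_def v_def by (simp add: mult_ac)
  have "(\<Sum>i<m. y i * \<bar>w i\<bar>) = (\<Sum>i<m. y i * w i)"
    unfolding w_def by (intro sum.cong refl) (simp add: sum_nonneg)
  then have "c * lnorm q m w = (\<Sum>i<m. y i * (c * w i))"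
    using y(3) by (simp add: sum_distrib_left mult_ac)
  also have "\<dots> \<le> (\<Sum>i<m. y i * (2 * sqrt 2 * expectation (\<lambda>\<omega>. \<bar>v i \<omega>\<bar>)))"
    using row y(1) by (intro sum_mono mult_left_mono) auto
  also have "\<dots> = 2 * sqrt 2 * expectation (\<lambda>\<omega>. \<Sum>i<m. y i * \<bar>v i \<omega>\<bar>)"
    using int_v by (subst Bochner_Integration.integral_sum) (auto simp: sum_distrib_left mult_ac)
  also have "\<dots> \<le> 2 * sqrt 2 * expectation (\<lambda>\<omega>. opnorm p q m n (\<lambda>i j. A i j * X i j \<omega>))"
  proof (intro mult_left_mono integral_mono)
    show "integrable M (\<lambda>\<omega>. \<Sum>i<m. y i * \<bar>v i \<omega>\<bar>)" using int_v by auto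
    show "integrable M (\<lambda>\<omega>. opnorm p q m n (\<lambda>i j. A i j * X i j \<omega>))"
      using integrable_opnorm[OF pq int] .
    show "(\<Sum>i<m. y i * \<bar>v i \<omega>\<bar>) \<le> opnorm p q m n (\<lambda>i j. A i j * X i j \<omega>)" for \<omega>
    proof -
      have "(\<Sum>i<m. y i * \<bar>v i \<omega>\<bar>) \<le> lnorm q m (\<lambda>i. v i \<omega>)"
        using y(2) by (rule spec)
      also have "\<dots> \<le> opnorm p q m n (\<lambda>i j. A i j * X i j \<omega>)"
        unfolding v_def by (rule lnorm_le_opnorm[OF pq x])
      finally show ?thesis .
    qed
  qed simp
  finally show ?thesis unfolding w_def .
qed

end

theorem proposition5p1:
  fixes M :: "'a measure"
    and X :: "nat \<Rightarrow> nat \<Rightarrow> 'a \<Rightarrow> real"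
    and A :: "nat \<Rightarrow> nat \<Rightarrow> real"
    and m n :: nat and c :: real and p q :: ereal
  assumes "prob_space M"
    and "prob_space.indep_vars M (\<lambda>_. borel) (\<lambda>(i, j). X i j) ({..<m} \<times> {..<n})"
    and "\<And>i j. i < m \<Longrightarrow> j < n \<Longrightarrow> integrable M (X i j)"
    and "\<And>i j. i < m \<Longrightarrow> j < n \<Longrightarrow> prob_space.expectation M (X i j) = 0"
    and "\<And>i j. i < m \<Longrightarrow> j < n \<Longrightarrow> prob_space.expectation M (\<lambda>\<omega>. \<bar>X i j \<omega>\<bar>) \<ge> c"
    and "0 < c"
    and "1 \<le> p" and "1 \<le> q"
  shows "prob_space.expectation M (\<lambda>\<omega>. opnorm p q m n (\<lambda>i j. A i j * X i j \<omega>))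
           \<ge> c / (2 * sqrt 2) * sqrt (opnorm (p / 2) (q / 2) m n (\<lambda>i j. (A i j)\<^sup>2))"
proof -
  interpret prob_space M by fact
  let ?E = "expectation (\<lambda>\<omega>. opnorm p q m n (\<lambda>i j. A i j * X i j \<omega>))"
  have "sqrt (opnorm (p / 2) (q / 2) m n (\<lambda>i j. (A i j)\<^sup>2)) \<le> 2 * sqrt 2 * ?E / c"
  proof (rule sqrt_opnorm_square_entries_le[OF assms(7,8)])
    fix x assume "lnorm p n x \<le> 1" "\<forall>j\<ge>n. x j = 0"
    from expectation_opnorm_ge_row_norms[OF assms(2-5,7,8) this]
    show "lnorm q m (\<lambda>i. sqrt (\<Sum>j<n. (A i j * x j)\<^sup>2)) \<le> 2 * sqrt 2 * ?E / c"
      using \<open>0 < c\<close> by (simp add: field_simps)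
  qed
  then show ?thesis using \<open>0 < c\<close> by (simp add: field_simps)
qed

end
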